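(* Let $G$ be a graph, let $\epsilon,\epsilon'$ be positive constants with $\epsilon+\epsilon'<1/2$, let $K$ be a set of nodes that is $\epsilon$-almost-clique-like, and let $T$ be the $i$-th bucket of a $k$-bucketing of $K$ which is $\epsilon'$-almost-clique-preserved. Then $|T|\in(1\pm 2(\epsilon+\epsilon'))|K|/k$, and $T$ is $2(\epsilon+\epsilon')$-almost-clique-like.
   Context: $N(v)$ is the set of neighbors of $v$ in $G$. For $\epsilon\in(0,1/2)$, a set of nodes $K$ is $\epsilon$-almost-clique-like if $|N(v)\cap K|\ge(1-\epsilon)|K|$ for all $v\in K$. A $k$-bucketing of $K$ is an assignment of a value $t(v)\in[k]$ to each $v\in K$, defining buckets $T_j=\{v\in K: t(v)=j\}$ for $j\in[k]$. The bucketing $\epsilon'$-almost-clique-preserves its $i$-th bucket $T_i$ if for every $v\in K$, $|N(v)\cap T_i|\in(1\pm\epsilon')|N(v)\cap K|/k$. The notation $x\in(1\pm\delta)y$ means $(1-\delta)y\le x\le(1+\delta)y$. *)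

theory Defs
  imports Main "HOL-Library.Disjoint_Sets" Complex_Main
begin

definition graph :: "('a \<Rightarrow> 'a \<Rightarrow> bool) \<Rightarrow> bool" where
  "graph E \<longleftrightarrow> (\<forall>u v. E u v \<longrightarrow> E v u) \<and> (\<forall>v. \<not> E v v)"

definition neighbors :: "('a \<Rightarrow> 'a \<Rightarrow> bool) \<Rightarrow> 'a \<Rightarrow> 'a set" where
  "neighbors E v = {u. E v u}"

definition in_pm :: "real \<Rightarrow> real \<Rightarrow> real \<Rightarrow> bool" where
  "in_pm x d y \<longleftrightarrow> (1 - d) * y \<le> x \<and> x \<le> (1 + d) * y"

definition almost_clique_like :: "('a \<Rightarrow> 'a \<Rightarrow> bool) \<Rightarrow> real \<Rightarrow> 'a set \<Rightarrow> bool" where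
  "almost_clique_like E eps K \<longleftrightarrow>
     (\<forall>v\<in>K. real (card (neighbors E v \<inter> K)) \<ge> (1 - eps) * real (card K))"

definition bucketing :: "'a set \<Rightarrow> nat \<Rightarrow> ('a \<Rightarrow> nat) \<Rightarrow> bool" where
  "bucketing K k t \<longleftrightarrow> (\<forall>v\<in>K. t v \<in> {1..k})"

definition bucket :: "'a set \<Rightarrow> ('a \<Rightarrow> nat) \<Rightarrow> nat \<Rightarrow> 'a set" where
  "bucket K t j = {v\<in>K. t v = j}"

definition preserves_bucket ::
  "('a \<Rightarrow> 'a \<Rightarrow> bool) \<Rightarrow> 'a set \<Rightarrow> nat \<Rightarrow> ('a \<Rightarrow> nat) \<Rightarrow> real \<Rightarrow> nat \<Rightarrow> bool" where
  "preserves_bucket E K k t eps' i \<longleftrightarrow>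
     (\<forall>v\<in>K. in_pm (real (card (neighbors E v \<inter> bucket K t i))) eps'
                   (real (card (neighbors E v \<inter> K)) / real k))"

end

theory Submission
  imports Defs
begin

text \<open>
  Every vertex of \<open>K\<close> has at least \<open>(1 - \<epsilon>) |K|\<close> neighbours in \<open>K\<close>, so by preservation it has
  between \<open>(1 - \<epsilon>') (1 - \<epsilon>) |K|/k\<close> and \<open>(1 + \<epsilon>') |K|/k\<close> neighbours in the bucket \<open>T\<close>.
  The lower bound already bounds \<open>|T|\<close> from below. Counting the edges between \<open>T\<close> and \<open>K\<close> from
  both sides gives \<open>|T| (1 - \<epsilon>) |K| \<le> |K| (1 + \<epsilon>') |K|/k\<close>, the upper bound on \<open>|T|\<close>; comparing it
  with the lower bound on the degrees into \<open>T\<close> shows that \<open>T\<close> is almost-clique-like.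
\<close>

lemma sum_card_neighbors_Int_swap:
  assumes "graph E" "finite A" "finite B"
  shows "(\<Sum>v\<in>A. card (neighbors E v \<inter> B)) = (\<Sum>u\<in>B. card (neighbors E u \<inter> A))"
proof -
  have card_eq: "card (neighbors E v \<inter> C) = (\<Sum>u\<in>C. if E v u then 1 else 0)"
    if "finite C" for v C
  proof -
    have "neighbors E v \<inter> C = {u\<in>C. E v u}"
      by (auto simp: neighbors_def)
    then show ?thesis
      using \<open>finite C\<close> by (simp add: sum.If_cases Int_def)
  qed
  have sym: "E u v \<longleftrightarrow> E v u" for u v
    using \<open>graph E\<close> by (auto simp: graph_def)
  have "(\<Sum>v\<in>A. card (neighbors E v \<inter> B)) = (\<Sum>v\<in>A. \<Sum>u\<in>B. if E v u then 1 else 0)"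
    using assms(3) by (simp add: card_eq)
  also have "\<dots> = (\<Sum>u\<in>B. \<Sum>v\<in>A. if E u v then 1 else 0)"
    by (subst sum.swap) (simp add: sym)
  also have "\<dots> = (\<Sum>u\<in>B. card (neighbors E u \<inter> A))"
    using assms(2) by (simp add: card_eq)
  finally show ?thesis .
qed

lemma bucket_subset: "bucket K t i \<subseteq> K"
  by (auto simp: bucket_def)

lemma bucket_degree_bounds:
  assumes "finite K" "almost_clique_like E eps K" "preserves_bucket E K k t eps' i"
    and "\<bar>eps'\<bar> \<le> 1" "v \<in> K"
  shows "(1 - eps') * ((1 - eps) * (real (card K) / real k))
           \<le> real (card (neighbors E v \<inter> bucket K t i))"
    and "real (card (neighbors E v \<inter> bucket K t i)) \<le> (1 + eps') * (real (card K) / real k)"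
proof -
  let ?dK = "real (card (neighbors E v \<inter> K))" and ?x = "real (card K) / real k"
  have preserved: "in_pm (real (card (neighbors E v \<inter> bucket K t i))) eps' (?dK / real k)"
    using assms(3,5) by (simp add: preserves_bucket_def)
  have "(1 - eps) * ?x \<le> ?dK / real k"
    using assms(2,5) divide_right_mono[of "(1 - eps) * real (card K)" ?dK "real k"]
    by (simp add: almost_clique_like_def)
  then have "(1 - eps') * ((1 - eps) * ?x) \<le> (1 - eps') * (?dK / real k)"
    using assms(4) by (intro mult_left_mono) auto
  then show "(1 - eps') * ((1 - eps) * ?x) \<le> real (card (neighbors E v \<inter> bucket K t i))"
    using preserved unfolding in_pm_def by linarith
  have "?dK / real k \<le> ?x"
    using assms(1) by (simp add: card_mono divide_right_mono)
  then have "(1 + eps') * (?dK / real k) \<le> (1 + eps') * ?x"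
    using assms(4) by (intro mult_left_mono) auto
  then show "real (card (neighbors E v \<inter> bucket K t i)) \<le> (1 + eps') * ?x"
    using preserved unfolding in_pm_def by linarith
qed

lemma bucket_card_lower:
  assumes "finite K" "almost_clique_like E eps K" "preserves_bucket E K k t eps' i"
    and "\<bar>eps'\<bar> \<le> 1"
  shows "(1 - eps') * ((1 - eps) * (real (card K) / real k)) \<le> real (card (bucket K t i))"
proof (cases "K = {}")
  case False
  then obtain v where "v \<in> K" by blast
  have "card (neighbors E v \<inter> bucket K t i) \<le> card (bucket K t i)"
    using assms(1) by (intro card_mono) (auto intro: finite_subset[OF bucket_subset])
  then show ?thesis
    using bucket_degree_bounds(1)[OF assms \<open>v \<in> K\<close>] by linarith
qed simp

lemma bucket_card_upper:
  assumes "graph E" "finite K" "almost_clique_like E eps K" "preserves_bucket E K k t eps' i"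
    and "\<bar>eps'\<bar> \<le> 1"
  shows "real (card (bucket K t i)) * (1 - eps) \<le> (1 + eps') * (real (card K) / real k)"
proof (cases "K = {}")
  case True
  then show ?thesis using assms(5) by (simp add: bucket_def)
next
  case False
  let ?T = "bucket K t i" and ?x = "real (card K) / real k"
  have finite_T: "finite ?T"
    by (rule finite_subset[OF bucket_subset assms(2)])
  have "real (card ?T) * (1 - eps) * real (card K) = (\<Sum>u\<in>?T. (1 - eps) * real (card K))"
    by simp
  also have "\<dots> \<le> (\<Sum>u\<in>?T. real (card (neighbors E u \<inter> K)))"
    using assms(3) bucket_subset[of K t i] by (intro sum_mono) (auto simp: almost_clique_like_def)
  also have "\<dots> = (\<Sum>v\<in>K. real (card (neighbors E v \<inter> ?T)))"
    using sum_card_neighbors_Int_swap[OF assms(1,2) finite_T] by (metis of_nat_sum)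
  also have "\<dots> \<le> (\<Sum>v\<in>K. (1 + eps') * ?x)"
    using bucket_degree_bounds(2)[OF assms(2-5)] by (intro sum_mono) auto
  also have "\<dots> = (1 + eps') * ?x * real (card K)"
    by simp
  finally have "real (card ?T) * (1 - eps) * real (card K) \<le> (1 + eps') * ?x * real (card K)" .
  moreover have "0 < real (card K)"
    using False assms(2) by (simp add: card_gt_0_iff)
  ultimately show ?thesis
    by (rule mult_right_le_imp_le)
qed

lemma pm_bounds_from_scaled_upper_bound:
  fixes e e' m x :: real
  assumes "0 \<le> e" "0 \<le> e'" "e + e' \<le> 1/2" "0 \<le> x" "m * (1 - e) \<le> (1 + e') * x"
  shows "m \<le> (1 + 2 * (e + e')) * x"
    and "(1 - 2 * (e + e')) * m \<le> (1 - e') * ((1 - e) * x)"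
proof -
  have pos: "0 < 1 - e" using assms by simp
  have "1 + e' \<le> (1 + 2 * (e + e')) * (1 - e)"
    using assms(1-3) mult_nonneg_nonneg[of e "1 - 2 * (e + e')"] by (simp add: algebra_simps)
  then have "(1 + e') * x \<le> (1 + 2 * (e + e')) * (1 - e) * x"
    using assms(4) by (rule mult_right_mono)
  then have "m * (1 - e) \<le> (1 + 2 * (e + e')) * x * (1 - e)"
    using assms(5) by (simp add: mult_ac)
  then show "m \<le> (1 + 2 * (e + e')) * x"
    using pos by (rule mult_right_le_imp_le)
  have "(1 - e') * (1 - e) * (1 - e) - (1 - 2 * (e + e')) * (1 + e')
          = e * e * (1 - e') + 4 * (e * e') + 2 * (e' * e')"
    by (simp add: algebra_simps)
  moreover have "0 \<le> e * e * (1 - e')" "0 \<le> e * e'" "0 \<le> e' * e'"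
    using assms(1-3) by simp_all
  ultimately have "(1 - 2 * (e + e')) * (1 + e') \<le> (1 - e') * (1 - e) * (1 - e)"
    by linarith
  then have "(1 - 2 * (e + e')) * (1 + e') * x \<le> (1 - e') * (1 - e) * (1 - e) * x"
    using assms(4) by (rule mult_right_mono)
  moreover have "(1 - 2 * (e + e')) * (m * (1 - e)) \<le> (1 - 2 * (e + e')) * ((1 + e') * x)"
    using assms(3,5) by (intro mult_left_mono) auto
  ultimately have "(1 - 2 * (e + e')) * m * (1 - e) \<le> (1 - e') * ((1 - e) * x) * (1 - e)"
    by (simp add: algebra_simps)
  then show "(1 - 2 * (e + e')) * m \<le> (1 - e') * ((1 - e) * x)"
    using pos by (rule mult_right_le_imp_le)
qed

lemma one_minus_sum_le_product:
  fixes e e' x :: real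
  assumes "0 \<le> e" "0 \<le> e'" "0 \<le> x"
  shows "(1 - 2 * (e + e')) * x \<le> (1 - e') * ((1 - e) * x)"
proof -
  have "1 - 2 * (e + e') \<le> (1 - e') * (1 - e)"
    using assms mult_nonneg_nonneg[of e e'] by (simp add: algebra_simps)
  then have "(1 - 2 * (e + e')) * x \<le> (1 - e') * (1 - e) * x"
    using assms(3) by (rule mult_right_mono)
  then show ?thesis
    by (simp add: mult.assoc)
qed

theorem lemma4p6:
  fixes E :: "'a \<Rightarrow> 'a \<Rightarrow> bool" and K :: "'a set" and k i :: nat
    and t :: "'a \<Rightarrow> nat" and eps eps' :: real
  assumes "graph E"
    and "finite K"
    and "0 < eps" and "eps < 1/2" and "0 < eps'" and "eps' < 1/2"
    and "eps + eps' < 1/2"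
    and "almost_clique_like E eps K"
    and "k \<ge> 1" and "bucketing K k t" and "i \<in> {1..k}"
    and "preserves_bucket E K k t eps' i"
  shows "in_pm (real (card (bucket K t i))) (2 * (eps + eps')) (real (card K) / real k)
         \<and> almost_clique_like E (2 * (eps + eps')) (bucket K t i)"
proof -
  let ?T = "bucket K t i" and ?x = "real (card K) / real k"
  have params: "0 \<le> eps" "0 \<le> eps'" "eps + eps' \<le> 1/2" "\<bar>eps'\<bar> \<le> 1" "0 \<le> ?x"
    using assms(3-7) by auto
  have upper: "real (card ?T) * (1 - eps) \<le> (1 + eps') * ?x"
    using bucket_card_upper[OF assms(1,2,8,12) params(4)] .
  note scaled = pm_bounds_from_scaled_upper_bound[OF params(1-3,5) upper]
  have "in_pm (real (card ?T)) (2 * (eps + eps')) ?x"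
    using one_minus_sum_le_product[OF params(1,2,5)] scaled(1)
      bucket_card_lower[OF assms(2,8,12) params(4)] by (simp add: in_pm_def)
  moreover have "almost_clique_like E (2 * (eps + eps')) ?T"
    using scaled(2) bucket_degree_bounds(1)[OF assms(2,8,12) params(4)] bucket_subset[of K t i]
    by (force simp: almost_clique_like_def)
  ultimately show ?thesis ..
qed

end
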